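(* Let $\lambda,\mu,\theta>0$, $\alpha\in\mathbb{R}$ and $\hat\lambda,\hat\mu,\hat\theta,\hat\alpha\in\mathbb{R}$, and let $\epsilon$ be a small parameter. Consider the delay differential system, with delay $\Delta>0$, $$\dot q_1(t) = (\lambda+\epsilon\hat\lambda)\,\frac{\exp\big(-(\theta+\epsilon\hat\theta)q_1(t-\Delta)+(\alpha+\epsilon\hat\alpha)\big)}{\exp\big(-(\theta+\epsilon\hat\theta)q_1(t-\Delta)+(\alpha+\epsilon\hat\alpha)\big)+\exp\big(-\theta q_2(t-\Delta)+\alpha\big)} - (\mu+\epsilon\hat\mu)\,q_1(t),$$ $$\dot q_2(t) = \lambda\,\frac{\exp\big(-\theta q_2(t-\Delta)+\alpha\big)}{\exp\big(-(\theta+\epsilon\hat\theta)q_1(t-\Delta)+(\alpha+\epsilon\hat\alpha)\big)+\exp\big(-\theta q_2(t-\Delta)+\alpha\big)} - \mu\,q_2(t).$$ Then this system has an approximate (up to order $\epsilon^2$) equilibrium point (constant solution) $$(q_1^*,q_2^* )=\Big(\frac{\lambda}{2\mu}+a\epsilon+O(\epsilon^2),\ \frac{\lambda}{2\mu}+b\epsilon+O(\epsilon^2)\Big),$$ where $$a=\frac{\lambda\theta+4\mu}{4\mu(\lambda\theta+2\mu)}\hat\lambda-\frac{\lambda(\lambda\theta+4\mu)}{4\mu^2(\lambda\theta+2\mu)}\hat\mu-\frac{\lambda^2}{4\mu(\lambda\theta+2\mu)}\hat\theta+\frac{\lambda}{2(\lambda\theta+2\mu)}\hat\alpha,$$ $$b=\frac{\lambda\theta}{4\mu(\lambda\theta+2\mu)}\hat\lambda-\frac{\lambda^2\theta}{4\mu^2(\lambda\theta+2\mu)}\hat\mu+\frac{\lambda^2}{4\mu(\lambda\theta+2\mu)}\hat\theta-\frac{\lambda}{2(\lambda\theta+2\mu)}\hat\alpha;$$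 that is, substituting these constants into the right-hand sides makes them vanish up to $O(\epsilon^2)$.
   Context: $q_1(t),q_2(t)$ are fluid queue lengths of two infinite-server queues; $\lambda$ is the arrival rate, $\mu$ the service rate, $\theta$ the customer sensitivity to queue length, $\alpha$ the preference parameter; the hatted quantities are perturbations applied (scaled by $\epsilon$) to the parameters of the first queue. Initial data are continuous functions on $[-\Delta,0]$. *)

theory Defs
  imports Complex_Main "HOL-Library.Landau_Symbols"
begin

text \<open>Right-hand sides of the perturbed delay system. Arguments: perturbation
 parameter eps, delayed values d1 = q1(t - Delta), d2 = q2(t - Delta), and the
 current values x1 = q1(t), x2 = q2(t).\<close>

definition rhs1 :: "real \<Rightarrow> real \<Rightarrow> real \<Rightarrow> real \<Rightarrow> real \<Rightarrow> real \<Rightarrow> real \<Rightarrow> real \<Rightarrow> real \<Rightarrow> real \<Rightarrow> real \<Rightarrow> real \<Rightarrow> real \<Rightarrow> real" where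
  "rhs1 lam mu th al lh mh thh ah eps d1 d2 x1 x2 =
     (lam + eps * lh) *
       (exp (- (th + eps * thh) * d1 + (al + eps * ah)) /
        (exp (- (th + eps * thh) * d1 + (al + eps * ah)) + exp (- th * d2 + al)))
     - (mu + eps * mh) * x1"

definition rhs2 :: "real \<Rightarrow> real \<Rightarrow> real \<Rightarrow> real \<Rightarrow> real \<Rightarrow> real \<Rightarrow> real \<Rightarrow> real \<Rightarrow> real \<Rightarrow> real \<Rightarrow> real" where
  "rhs2 lam mu th al thh ah eps d1 d2 x2 =
     lam *
       (exp (- th * d2 + al) /
        (exp (- (th + eps * thh) * d1 + (al + eps * ah)) + exp (- th * d2 + al)))
     - mu * x2"

definition coef_a :: "real \<Rightarrow> real \<Rightarrow> real \<Rightarrow> real \<Rightarrow> real \<Rightarrow> real \<Rightarrow> real \<Rightarrow> real" where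
  "coef_a lam mu th lh mh thh ah =
     (lam * th + 4 * mu) / (4 * mu * (lam * th + 2 * mu)) * lh
     - lam * (lam * th + 4 * mu) / (4 * mu^2 * (lam * th + 2 * mu)) * mh
     - lam^2 / (4 * mu * (lam * th + 2 * mu)) * thh
     + lam / (2 * (lam * th + 2 * mu)) * ah"

definition coef_b :: "real \<Rightarrow> real \<Rightarrow> real \<Rightarrow> real \<Rightarrow> real \<Rightarrow> real \<Rightarrow> real \<Rightarrow> real" where
  "coef_b lam mu th lh mh thh ah =
     lam * th / (4 * mu * (lam * th + 2 * mu)) * lh
     - lam^2 * th / (4 * mu^2 * (lam * th + 2 * mu)) * mh
     + lam^2 / (4 * mu * (lam * th + 2 * mu)) * thh
     - lam / (2 * (lam * th + 2 * mu)) * ah"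

end

theory Submission
  imports Defs "HOL-Real_Asymp.Real_Asymp"
begin

text \<open>
  Both right-hand sides depend on the delayed values only through the logit difference
  \<open>x - y\<close> of the two exponents: the first queue receives the share
  \<open>1 / (1 + exp (-(x - y)))\<close> of its arrival rate, the second one the complementary share.
  Along the ansatz \<open>q\<^sub>1 = \<lambda>/(2\<mu>) + a\<epsilon>\<close>, \<open>q\<^sub>2 = \<lambda>/(2\<mu>) + b\<epsilon>\<close> this difference is
  \<open>d\<epsilon> + t\<epsilon>\<^sup>2\<close>, and the logistic share expands as \<open>1/2 + d\<epsilon>/4 + O(\<epsilon>\<^sup>2)\<close>.
  The constant terms of both right-hand sides vanish because \<open>\<mu> q\<^sub>i(0) = \<lambda>/2\<close>; the linear
  terms give a linear system in \<open>a\<close> and \<open>b\<close> (its sum and difference equations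
  decouple), whose solution is exactly \<open>coef_a\<close>, \<open>coef_b\<close>.
\<close>

lemma exp_share_eq_logistic:
  fixes x y :: real
  shows "exp x / (exp x + exp y) = 1 / (1 + exp (- (x - y)))"
proof -
  have "exp x + exp y = exp x * (1 + exp (- (x - y)))"
    by (simp add: distrib_left exp_diff)
  then show ?thesis by simp
qed

lemma rhs1_affine_ansatz:
  "rhs1 lam mu th al lh mh thh ah e (h + a*e) (h + b*e) (h + a*e) (h + b*e)
     = (lam + lh*e) / (1 + exp (- ((ah - thh*h - th*(a - b))*e + (- thh*a)*e^2)))
       - (mu + mh*e)*(h + a*e)"
proof -
  have "(- (th + e*thh)*(h + a*e) + (al + e*ah)) - (- th*(h + b*e) + al)
      = (ah - thh*h - th*(a - b))*e + (- thh*a)*e^2"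
    by (simp add: algebra_simps power2_eq_square)
  then show ?thesis
    unfolding rhs1_def exp_share_eq_logistic by (simp add: mult.commute)
qed

lemma rhs2_affine_ansatz:
  "rhs2 lam mu th al thh ah e (h + a*e) (h + b*e) (h + b*e)
     = lam / (1 + exp (- ((- (ah - thh*h - th*(a - b)))*e + (thh*a)*e^2)))
       - mu*(h + b*e)"
proof -
  have "(- th*(h + b*e) + al) - (- (th + e*thh)*(h + a*e) + (al + e*ah))
      = (- (ah - thh*h - th*(a - b)))*e + (thh*a)*e^2"
    by (simp add: algebra_simps power2_eq_square)
  moreover have "exp y / (exp x + exp y) = 1 / (1 + exp (- (y - x)))" for x y :: real
    using exp_share_eq_logistic[of y x] by (simp add: add.commute)
  ultimately show ?thesis
    unfolding rhs2_def by simp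
qed

lemma affine_times_logistic_bigo:
  fixes p q d t r :: real
  shows "(\<lambda>e. (p + q*e) / (1 + exp (- (d*e + t*e^2))) - (p/2 + (q/2 + p*d/4)*e + r*e^2))
           \<in> O[at 0](\<lambda>e. e^2)"
  by real_asymp

lemma linearised_equilibrium:
  fixes lam mu th lh mh thh ah h a b d :: real
  assumes sum: "mu*(a + b) = lh/2 - mh*h"
    and diff: "(lam*th + 2*mu)*(a - b) = lh + lam*(ah - thh*h) - 2*mh*h"
    and d: "d = ah - thh*h - th*(a - b)"
  shows "lh/2 + lam*d/4 = mh*h + mu*a" and "lam*(-d)/4 = mu*b"
proof -
  have "lam*d = 2*mu*(a - b) + 2*mh*h - lh"
    using diff unfolding d by (simp add: algebra_simps)
  then show "lh/2 + lam*d/4 = mh*h + mu*a" and "lam*(-d)/4 = mu*b"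
    using sum by (simp_all add: algebra_simps)
qed

lemma coef_a_add_coef_b:
  assumes "mu \<noteq> 0" "lam*th + 2*mu \<noteq> 0"
  shows "mu*(coef_a lam mu th lh mh thh ah + coef_b lam mu th lh mh thh ah)
           = lh/2 - mh*(lam/(2*mu))"
proof -
  \<comment> \<open>abstracting the denominator lets \<open>field_simps\<close> see that it is nonzero\<close>
  define D where "D = lam*th + 2*mu"
  have "D \<noteq> 0" using assms(2) unfolding D_def .
  then show ?thesis
    using assms(1) unfolding coef_a_def coef_b_def D_def[symmetric]
    by (simp add: field_simps power2_eq_square; simp add: D_def algebra_simps)
qed

lemma coef_a_diff_coef_b:
  assumes "mu \<noteq> 0" "lam*th + 2*mu \<noteq> 0"
  shows "(lam*th + 2*mu)*(coef_a lam mu th lh mh thh ah - coef_b lam mu th lh mh thh ah)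
           = lh + lam*(ah - thh*(lam/(2*mu))) - 2*mh*(lam/(2*mu))"
proof -
  define D where "D = lam*th + 2*mu"
  have "D \<noteq> 0" using assms(2) unfolding D_def .
  then show ?thesis
    using assms(1) unfolding coef_a_def coef_b_def D_def[symmetric]
    by (simp add: field_simps power2_eq_square; simp add: D_def algebra_simps)
qed

theorem mainTheorem1:
  fixes lam mu th al lh mh thh ah :: real
  assumes "lam > 0" and "mu > 0" and "th > 0"
  defines "q1 \<equiv> \<lambda>eps::real. lam / (2 * mu) + coef_a lam mu th lh mh thh ah * eps"
      and "q2 \<equiv> \<lambda>eps::real. lam / (2 * mu) + coef_b lam mu th lh mh thh ah * eps"
  shows "((\<lambda>eps. rhs1 lam mu th al lh mh thh ah eps (q1 eps) (q2 eps) (q1 eps) (q2 eps))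
           \<in> O[at 0](\<lambda>eps. eps ^ 2)) \<and>
         ((\<lambda>eps. rhs2 lam mu th al thh ah eps (q1 eps) (q2 eps) (q2 eps))
           \<in> O[at 0](\<lambda>eps. eps ^ 2))"
proof -
  define h where "h = lam/(2*mu)"
  define a where "a = coef_a lam mu th lh mh thh ah"
  define b where "b = coef_b lam mu th lh mh thh ah"
  define d where "d = ah - thh*h - th*(a - b)"
  have nonzero: "mu \<noteq> 0" "lam*th + 2*mu \<noteq> 0"
    using assms(2) mult_pos_pos[OF assms(1,3)] by linarith+
  have half: "mu*h = lam/2"
    using nonzero(1) unfolding h_def by simp
  have sum: "mu*(a + b) = lh/2 - mh*h"
    unfolding a_def b_def h_def by (rule coef_a_add_coef_b[OF nonzero])
  have diff: "(lam*th + 2*mu)*(a - b) = lh + lam*(ah - thh*h) - 2*mh*h"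
    unfolding a_def b_def h_def by (rule coef_a_diff_coef_b[OF nonzero])
  note linear = linearised_equilibrium[OF sum diff d_def]
  have "rhs1 lam mu th al lh mh thh ah e (q1 e) (q2 e) (q1 e) (q2 e)
      = (lam + lh*e) / (1 + exp (- (d*e + (- thh*a)*e^2))) - (lam/2 + (lh/2 + lam*d/4)*e + mh*a*e^2)"
    and "rhs2 lam mu th al thh ah e (q1 e) (q2 e) (q2 e)
      = (lam + 0*e) / (1 + exp (- ((-d)*e + (thh*a)*e^2))) - (lam/2 + (0/2 + lam*(-d)/4)*e + 0*e^2)"
    for e
    unfolding q1_def q2_def h_def[symmetric] a_def[symmetric] b_def[symmetric]
      rhs1_affine_ansatz rhs2_affine_ansatz d_def[symmetric] linear half[symmetric]
    by (simp_all add: algebra_simps power2_eq_square)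
  then show ?thesis
    by (simp only: affine_times_logistic_bigo)
qed

end
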